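(* Membership queries for $k$-safety hyperproperties are, in general, undecidable: there exist $k$, a finite alphabet $\Sigma$ and a $k$-safety hyperproperty $\mathbf{S}$ over $\Sigma$ such that it is undecidable, given a finite set $T \subseteq \Sigma^*$ of finite traces, whether $T \in \mathrm{Bad}(\mathbf{S})$.
   Context: For finite $T \subseteq \Sigma^*$ and $T' \subseteq \Sigma^\omega$, $T \le T'$ means every $t \in T$ is a prefix of some $t' \in T'$. A hyperproperty is a set $\mathbf{S} \subseteq \mathcal{P}(\Sigma^\omega)$; $\mathrm{Bad}(\mathbf{S}) = \{T \subseteq \Sigma^* \text{ finite} \mid \forall T' \subseteq \Sigma^\omega.\ T \le T' \Rightarrow T' \notin \mathbf{S}\}$. $\mathbf{S}$ is a $k$-safety hyperproperty if every $T' \subseteq \Sigma^\omega$ with $T' \notin \mathbf{S}$ has some $T \in \mathrm{Bad}(\mathbf{S})$ with $|T| \le k$ and $T \le T'$. *)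

theory Defs
  imports Main "HOL-Library.Nat_Bijection"
begin

datatype recf =
    Zero
  | Succ
  | Proj nat
  | Comp recf "recf list"
  | Prec recf recf
  | Mu recf

inductive rec_eval :: "recf \<Rightarrow> nat list \<Rightarrow> nat \<Rightarrow> bool" where
  zero: "rec_eval Zero xs 0"
| succ: "rec_eval Succ (x # xs) (Suc x)"
| proj: "i < length xs \<Longrightarrow> rec_eval (Proj i) xs (xs ! i)"
| comp: "list_all2 (\<lambda>g y. rec_eval g xs y) gs ys \<Longrightarrow> rec_eval f ys z
          \<Longrightarrow> rec_eval (Comp f gs) xs z"
| prec0: "rec_eval f xs y \<Longrightarrow> rec_eval (Prec f g) (0 # xs) y"
| precS: "rec_eval (Prec f g) (n # xs) y \<Longrightarrow> rec_eval g (n # y # xs) z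
          \<Longrightarrow> rec_eval (Prec f g) (Suc n # xs) z"
| mu: "rec_eval f (n # xs) 0 \<Longrightarrow> (\<forall>m<n. \<exists>y. rec_eval f (m # xs) (Suc y))
          \<Longrightarrow> rec_eval (Mu f) xs n"

definition decidable_on :: "nat set \<Rightarrow> (nat \<Rightarrow> bool) \<Rightarrow> bool" where
  "decidable_on D P \<longleftrightarrow> (\<exists>f. \<forall>x\<in>D. rec_eval f [x] (if P x then 1 else 0))"

definition omega_words :: "nat set \<Rightarrow> (nat \<Rightarrow> nat) set" where
  "omega_words Alph = {w. \<forall>i. w i \<in> Alph}"

definition is_prefix :: "nat list \<Rightarrow> (nat \<Rightarrow> nat) \<Rightarrow> bool" where
  "is_prefix t w \<longleftrightarrow> (\<forall>i<length t. t ! i = w i)"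

definition trace_le :: "nat list set \<Rightarrow> (nat \<Rightarrow> nat) set \<Rightarrow> bool" where
  "trace_le T T' \<longleftrightarrow> (\<forall>t\<in>T. \<exists>t'\<in>T'. is_prefix t t')"

definition hyperproperty :: "nat set \<Rightarrow> (nat \<Rightarrow> nat) set set \<Rightarrow> bool" where
  "hyperproperty Alph S \<longleftrightarrow> S \<subseteq> Pow (omega_words Alph)"

definition Bad :: "nat set \<Rightarrow> (nat \<Rightarrow> nat) set set \<Rightarrow> nat list set set" where
  "Bad Alph S = {T. finite T \<and> T \<subseteq> lists Alph \<and>
     (\<forall>T'. T' \<subseteq> omega_words Alph \<longrightarrow> trace_le T T' \<longrightarrow> T' \<notin> S)}"

definition k_safety :: "nat set \<Rightarrow> nat \<Rightarrow> (nat \<Rightarrow> nat) set set \<Rightarrow> bool" where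
  "k_safety Alph k S \<longleftrightarrow> hyperproperty Alph S \<and>
     (\<forall>T'. T' \<subseteq> omega_words Alph \<longrightarrow> T' \<notin> S \<longrightarrow>
        (\<exists>T\<in>Bad Alph S. card T \<le> k \<and> trace_le T T'))"

definition encode_traces :: "nat list set \<Rightarrow> nat" where
  "encode_traces T = set_encode (list_encode ` T)"

definition trace_set_codes :: "nat set \<Rightarrow> nat set" where
  "trace_set_codes Alph = encode_traces ` {T. finite T \<and> T \<subseteq> lists Alph}"

end

theory Submission
  imports Defs "HOL-Library.Countable_Set"
begin

(* For A a set of naturals, let S_A be the hyperproperty of sets of binary omega-words none of
   which starts with 0^n 1 for n in A. Each S_A is 1-safety, and the singleton {0^n 1} is a bad
   prefix set of S_A iff n in A. Hence a decider for Bad(S_A) decides A, and by determinism of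
   evaluation distinct A need distinct deciders. There are only countably many programs but
   uncountably many A, so some Bad(S_A) is undecidable. *)

instance recf :: countable
  by countable_datatype

lemma list_all2_unique:
  assumes "list_all2 (\<lambda>x y. R x y \<and> (\<forall>z. R x z \<longrightarrow> y = z)) xs ys" and "list_all2 R xs ys'"
  shows "ys = ys'"
  using assms
proof (induction arbitrary: ys' rule: list_all2_induct)
  case Nil
  then show ?case by simp
next
  case (Cons x xs y ys)
  then obtain y' ys'' where "ys' = y' # ys''" "R x y'" "list_all2 R xs ys''"
    by (cases ys') auto
  with Cons show ?case by blast
qed

inductive_cases rec_eval_ZeroE: "rec_eval Zero xs y"
inductive_cases rec_eval_SuccE: "rec_eval Succ xs y"
inductive_cases rec_eval_ProjE: "rec_eval (Proj i) xs y"
inductive_cases rec_eval_CompE: "rec_eval (Comp f gs) xs y"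
inductive_cases rec_eval_Prec0E: "rec_eval (Prec f g) (0 # xs) y"
inductive_cases rec_eval_PrecSE: "rec_eval (Prec f g) (Suc n # xs) y"
inductive_cases rec_eval_MuE: "rec_eval (Mu f) xs y"

lemma rec_eval_deterministic:
  "rec_eval f xs y \<Longrightarrow> rec_eval f xs y' \<Longrightarrow> y = y'"
proof (induction arbitrary: y' rule: rec_eval.induct)
  case zero
  from zero.prems show ?case by (rule rec_eval_ZeroE) simp
next
  case succ
  from succ.prems show ?case by (rule rec_eval_SuccE) simp
next
  case proj
  from proj.prems show ?case by (rule rec_eval_ProjE) simp
next
  case (comp xs gs ys f z)
  from comp.prems obtain ys' where "list_all2 (\<lambda>g y. rec_eval g xs y) gs ys'" "rec_eval f ys' y'"
    by (rule rec_eval_CompE)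
  moreover from this(1) have "ys = ys'"
    by (rule list_all2_unique[OF comp(1)])
  ultimately show ?case
    using comp(2) by simp
next
  case (prec0 f xs y g)
  from prec0.prems have "rec_eval f xs y'"
    by (rule rec_eval_Prec0E)
  then show ?case by (rule prec0.IH)
next
  case (precS f g n xs y z)
  from precS.prems obtain y'' where "rec_eval (Prec f g) (n # xs) y''" "rec_eval g (n # y'' # xs) y'"
    by (rule rec_eval_PrecSE)
  moreover from this(1) have "y = y''"
    by (rule precS.IH(1))
  ultimately show ?case
    using precS.IH(2) by simp
next
  case (mu f n xs)
  from mu.prems have zero: "rec_eval f (y' # xs) 0" and pos: "\<forall>m<y'. \<exists>y. rec_eval f (m # xs) (Suc y)"
    by (rule rec_eval_MuE, simp)+
  show ?case
  proof (rule linorder_cases[of n y'])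
    assume "n < y'"
    with mu.IH(1) pos show ?thesis by fastforce
  next
    assume "y' < n"
    with mu.IH(2) zero show ?thesis by blast
  qed
qed

lemma decidable_on_vimage:
  assumes "decidable_on D P" and "range c \<subseteq> D"
  shows "\<exists>f. {n. P (c n)} = {n. rec_eval f [c n] 1}"
proof -
  from assms(1) obtain f where f: "\<forall>x\<in>D. rec_eval f [x] (if P x then 1 else 0)"
    unfolding decidable_on_def by blast
  have "P (c n) \<longleftrightarrow> rec_eval f [c n] 1" for n
  proof -
    have "rec_eval f [c n] (if P (c n) then 1 else 0)"
      using f assms(2) by blast
    then show ?thesis
      using rec_eval_deterministic[of f "[c n]" 0 1] by (cases "P (c n)") auto
  qed
  then show ?thesis by blast
qed

lemma countable_decidable_vimages:
  assumes "range c \<subseteq> D"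
  shows "countable {{n. P (c n)} | P. decidable_on D P}"
proof (rule countable_subset)
  show "{{n. P (c n)} | P. decidable_on D P} \<subseteq> range (\<lambda>f. {n. rec_eval f [c n] 1})"
    using decidable_on_vimage[OF _ assms] by blast
qed simp

lemma uncountable_nat_sets: "uncountable (UNIV :: nat set set)"
  using Cantors_theorem[of "UNIV :: nat set"] by (auto simp: uncountable_def)

lemma ex_not_decidable_on:
  fixes c :: "nat \<Rightarrow> nat"
  assumes "range c \<subseteq> D" and "\<And>A n. P A (c n) \<longleftrightarrow> n \<in> A"
  shows "\<exists>A. \<not> decidable_on D (P A)"
proof (rule ccontr)
  assume "\<nexists>A. \<not> decidable_on D (P A)"
  then have "A \<in> {{n. Q (c n)} | Q. decidable_on D Q}" for A
    using assms(2) by (intro CollectI exI[of _ "P A"]) auto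
  then have "UNIV \<subseteq> {{n. Q (c n)} | Q. decidable_on D Q}"
    by blast
  then have "countable (UNIV :: nat set set)"
    using countable_decidable_vimages[OF assms(1)] by (rule countable_subset)
  with uncountable_nat_sets show False
    by contradiction
qed

definition marker :: "nat \<Rightarrow> nat list" where
  "marker n = replicate n 0 @ [1]"

definition avoid_markers :: "nat set \<Rightarrow> (nat \<Rightarrow> nat) set set" where
  "avoid_markers A =
     {T'. T' \<subseteq> omega_words {0, 1} \<and> (\<forall>w\<in>T'. \<forall>n\<in>A. \<not> is_prefix (marker n) w)}"

lemma marker_in_lists: "marker n \<in> lists {0, 1}"
  by (auto simp: marker_def in_lists_conv_set)

lemma marker_Bad_if_mem:
  assumes "n \<in> A"
  shows "{marker n} \<in> Bad {0, 1} (avoid_markers A)"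
  using assms marker_in_lists by (auto simp: Bad_def trace_le_def avoid_markers_def)

lemma is_prefix_marker_iff: "is_prefix (marker n) w \<longleftrightarrow> (\<forall>i<n. w i = 0) \<and> w n = 1"
  by (auto simp: is_prefix_def marker_def nth_append less_Suc_eq)

lemma marker_Bad_iff: "{marker n} \<in> Bad {0, 1} (avoid_markers A) \<longleftrightarrow> n \<in> A"
proof
  assume bad: "{marker n} \<in> Bad {0, 1} (avoid_markers A)"
  define w :: "nat \<Rightarrow> nat" where "w i = (if i = n then 1 else 0)" for i
  have words: "{w} \<subseteq> omega_words {0, 1}"
    by (simp add: omega_words_def w_def)
  have "is_prefix (marker m) w \<longleftrightarrow> m = n" for m
    by (auto simp: is_prefix_marker_iff w_def)
  then have "trace_le {marker n} {w}" and "n \<notin> A \<Longrightarrow> {w} \<in> avoid_markers A"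
    using words by (auto simp: trace_le_def avoid_markers_def)
  with bad words show "n \<in> A"
    by (auto simp: Bad_def)
qed (rule marker_Bad_if_mem)

lemma avoid_markers_1_safety: "k_safety {0, 1} 1 (avoid_markers A)"
  unfolding k_safety_def
proof (intro conjI allI impI)
  show "hyperproperty {0, 1} (avoid_markers A)"
    by (auto simp: hyperproperty_def avoid_markers_def)
next
  fix T' assume "T' \<subseteq> omega_words {0, 1}" and "T' \<notin> avoid_markers A"
  then obtain w n where "w \<in> T'" "n \<in> A" "is_prefix (marker n) w"
    by (auto simp: avoid_markers_def)
  then show "\<exists>T\<in>Bad {0, 1} (avoid_markers A). card T \<le> 1 \<and> trace_le T T'"
    by (intro bexI[of _ "{marker n}"] marker_Bad_if_mem) (auto simp: trace_le_def)
qed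

lemma encode_traces_eq_iff:
  "finite T \<Longrightarrow> finite T' \<Longrightarrow> encode_traces T = encode_traces T' \<longleftrightarrow> T = T'"
  by (simp add: encode_traces_def set_encode_eq inj_image_eq_iff[OF inj_list_encode])

theorem corollary3:
  shows "\<exists>k Alph S. finite Alph \<and> k_safety Alph k S \<and>
     \<not> decidable_on (trace_set_codes Alph)
         (\<lambda>n. \<exists>T. finite T \<and> T \<subseteq> lists Alph \<and> encode_traces T = n \<and> T \<in> Bad Alph S)"
proof -
  define P where "P A = (\<lambda>n.
    \<exists>T. finite T \<and> T \<subseteq> lists {0, 1} \<and> encode_traces T = n \<and> T \<in> Bad {0, 1} (avoid_markers A))"
    for A
  define c where "c n = encode_traces {marker n}" for n
  have codes: "range c \<subseteq> trace_set_codes {0, 1}"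
    using marker_in_lists by (auto simp: c_def trace_set_codes_def)
  have P_c: "P A (c n) \<longleftrightarrow> n \<in> A" for A n
  proof -
    have "T = {marker n}" if "finite T" "encode_traces T = encode_traces {marker n}" for T
      using that encode_traces_eq_iff[of T "{marker n}"] by simp
    then show ?thesis
      unfolding P_def c_def marker_Bad_iff[symmetric] using marker_in_lists[of n] by blast
  qed
  obtain A where "\<not> decidable_on (trace_set_codes {0, 1}) (P A)"
    using ex_not_decidable_on[OF codes P_c] by blast
  then show ?thesis
    unfolding P_def
    by (intro exI[of _ 1] exI[of _ "{0, 1}"] exI[of _ "avoid_markers A"] conjI avoid_markers_1_safety) simp_all
qed

end
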